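(* Let $\Lambda_n$ ($n\in\mathbb{N}$) be continuous, causal, identifiable in-context maps $\mathrm{Lip}_C^\sigma(\tilde\Omega)\times\tilde\Omega\to\mathbb{R}^{d'}$ and let $\Lambda^*:\mathrm{Lip}_C^\sigma(\tilde\Omega)\times\tilde\Omega\to\mathbb{R}^{d'}$ be continuous and causal. If $\sup_{(\mu,x,t)\in\mathrm{Lip}_C^\sigma(\tilde\Omega)\times\tilde\Omega}|\Lambda_n(\mu,x,t)-\Lambda^*(\mu,x,t)|\to0$ as $n\to\infty$, then $\Lambda^*$ is identifiable.
   Context: $\Omega\subset\mathbb{R}^d$ compact, $\tilde\Omega=\Omega\times[0,1]$, $C>0$, $\sigma\in(0,1)$, $\bar\mu$ the time marginal. $\mathrm{Lip}_C^\sigma(\tilde\Omega)$: all $\mu\in\mathcal{P}(\tilde\Omega)$ with $\bar\mu(\{0\})\ge\sigma$ admitting a disintegration $d\mu(x,s)=d\mu(x|s)d\bar\mu(s)$ with $W_2(\mu(\cdot|s),\mu(\cdot|t))\le C|s-t|$. Continuity is for weak$^*$ $\times$ Euclidean topology. Masked measure $\mu_t=\frac{1_{[0,t]}}{\bar\mu([0,t])}\cdot\mu$ (which lies in $\mathrm{Lip}_C^\sigma(\tilde\Omega)$). Causal: $\Lambda(\mu,x,t)=\Lambda(\mu_t,x,t)$ for all $(\mu,x,t)$. Identifiable: for $\mu\in\mathrm{Lip}_C^\sigma(\tilde\Omega)$ and $t,t'\in[0,1]$, $\mu_t=\mu_{t'}$ implies $\Lambda(\mu_t,\cdot,t)=\Lambda(\mu_{t'},\cdot,t')$.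 *)

theory Defs
  imports "HOL-Probability.Probability"
begin

text \<open>Measures on \<open>\<Omega> \<times> [0,1]\<close> are represented as Borel measures on the product type
  \<open>'a \<times> real\<close> (with \<open>'a\<close> a Euclidean space standing for R^d) that are concentrated on \<open>\<Omega> \<times> {0..1}\<close>.\<close>

definition time_marginal :: "('a::euclidean_space \<times> real) measure \<Rightarrow> real measure" where
  "time_marginal \<mu> = distr \<mu> borel snd"

definition couplings :: "'a::euclidean_space measure \<Rightarrow> 'a measure \<Rightarrow> ('a \<times> 'a) measure set" where
  "couplings \<nu>1 \<nu>2 = {\<pi>. sets \<pi> = sets borel \<and> prob_space \<pi> \<and>
      distr \<pi> borel fst = \<nu>1 \<and> distr \<pi> borel snd = \<nu>2}"

definition W2_sq :: "'a::euclidean_space measure \<Rightarrow> 'a measure \<Rightarrow> ennreal" where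
  "W2_sq \<nu>1 \<nu>2 = (INF \<pi>\<in>couplings \<nu>1 \<nu>2. \<integral>\<^sup>+ p. ennreal ((norm (fst p - snd p))\<^sup>2) \<partial>\<pi>)"

definition Lip_class :: "real \<Rightarrow> real \<Rightarrow> 'a::euclidean_space set \<Rightarrow> ('a \<times> real) measure set" where
  "Lip_class C \<sigma> \<Omega> = {\<mu>. sets \<mu> = sets borel \<and> prob_space \<mu> \<and> emeasure \<mu> (\<Omega> \<times> {0..1}) = 1 \<and>
      emeasure (time_marginal \<mu>) {0} \<ge> ennreal \<sigma> \<and>
      (\<exists>\<kappa> :: real \<Rightarrow> 'a measure.
         (\<forall>s. sets (\<kappa> s) = sets borel \<and> prob_space (\<kappa> s)) \<and>
         (\<forall>s\<in>{0..1}. emeasure (\<kappa> s) \<Omega> = 1) \<and>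
         (\<forall>B\<in>sets borel. (\<lambda>s. emeasure (\<kappa> s) B) \<in> borel_measurable borel) \<and>
         (\<forall>A\<in>sets borel. emeasure \<mu> A =
              (\<integral>\<^sup>+ s. emeasure (\<kappa> s) {x. (x, s) \<in> A} \<partial>(time_marginal \<mu>))) \<and>
         (\<forall>s\<in>{0..1}. \<forall>t\<in>{0..1}. W2_sq (\<kappa> s) (\<kappa> t) \<le> ennreal ((C * \<bar>s - t\<bar>)\<^sup>2)))}"

definition mask :: "('a::euclidean_space \<times> real) measure \<Rightarrow> real \<Rightarrow> ('a \<times> real) measure" where
  "mask \<mu> t = density \<mu> (\<lambda>p. indicator (UNIV \<times> {0..t}) p / emeasure (time_marginal \<mu>) {0..t})"

definition weak_star_topology :: "('a::euclidean_space \<times> real) measure topology" where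
  "weak_star_topology = topology_generated_by
     {{\<mu>. (\<integral> p. f p \<partial>\<mu>) \<in> U} | f U. continuous_on UNIV f \<and> bounded (range f) \<and> open (U :: real set)}"

definition in_context_continuous ::
  "real \<Rightarrow> real \<Rightarrow> 'a::euclidean_space set \<Rightarrow> (('a \<times> real) measure \<Rightarrow> 'a \<Rightarrow> real \<Rightarrow> 'e::euclidean_space) \<Rightarrow> bool" where
  "in_context_continuous C \<sigma> \<Omega> \<Lambda> \<longleftrightarrow>
     continuous_map (prod_topology (subtopology weak_star_topology (Lip_class C \<sigma> \<Omega>))
                                   (subtopology euclidean (\<Omega> \<times> {0..1})))
                    euclidean (\<lambda>(\<mu>, x, t). \<Lambda> \<mu> x t)"

definition causal ::
  "real \<Rightarrow> real \<Rightarrow> 'a::euclidean_space set \<Rightarrow> (('a \<times> real) measure \<Rightarrow> 'a \<Rightarrow> real \<Rightarrow> 'e) \<Rightarrow> bool" where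
  "causal C \<sigma> \<Omega> \<Lambda> \<longleftrightarrow>
     (\<forall>\<mu>\<in>Lip_class C \<sigma> \<Omega>. \<forall>x\<in>\<Omega>. \<forall>t\<in>{0..1}. \<Lambda> \<mu> x t = \<Lambda> (mask \<mu> t) x t)"

definition identifiable ::
  "real \<Rightarrow> real \<Rightarrow> 'a::euclidean_space set \<Rightarrow> (('a \<times> real) measure \<Rightarrow> 'a \<Rightarrow> real \<Rightarrow> 'e) \<Rightarrow> bool" where
  "identifiable C \<sigma> \<Omega> \<Lambda> \<longleftrightarrow>
     (\<forall>\<mu>\<in>Lip_class C \<sigma> \<Omega>. \<forall>t\<in>{0..1}. \<forall>t'\<in>{0..1}.
        mask \<mu> t = mask \<mu> t' \<longrightarrow> (\<forall>x\<in>\<Omega>. \<Lambda> (mask \<mu> t) x t = \<Lambda> (mask \<mu> t') x t'))"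

end

theory Submission
  imports Defs
begin

text \<open>For a causal map, identifiability says only that \<open>\<Lambda>(\<mu>, x, t) = \<Lambda>(\<mu>, x, t')\<close>
  whenever \<open>\<mu>\<^sub>t = \<mu>\<^sub>t'\<close>. That is a family of pointwise equations, and pointwise
  equations survive pointwise (in particular uniform) limits.\<close>

lemma causal_identifiable_iff:
  assumes "causal C \<sigma> \<Omega> \<Lambda>"
  shows "identifiable C \<sigma> \<Omega> \<Lambda> \<longleftrightarrow>
    (\<forall>\<mu>\<in>Lip_class C \<sigma> \<Omega>. \<forall>t\<in>{0..1}. \<forall>t'\<in>{0..1}.
       mask \<mu> t = mask \<mu> t' \<longrightarrow> (\<forall>x\<in>\<Omega>. \<Lambda> \<mu> x t = \<Lambda> \<mu> x t'))"
proof -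
  have "\<Lambda> (mask \<mu> t) x t = \<Lambda> \<mu> x t"
    if "\<mu> \<in> Lip_class C \<sigma> \<Omega>" "x \<in> \<Omega>" "t \<in> {0..1}" for \<mu> x t
    using assms that unfolding causal_def by simp
  then show ?thesis
    unfolding identifiable_def by (intro ball_cong imp_cong refl) metis
qed

lemma identifiable_pointwise_limit:
  fixes \<Lambda>s :: "nat \<Rightarrow> ('a::euclidean_space \<times> real) measure \<Rightarrow> 'a \<Rightarrow> real \<Rightarrow> 'e::metric_space"
  assumes causal: "\<And>n. causal C \<sigma> \<Omega> (\<Lambda>s n)" "causal C \<sigma> \<Omega> \<Lambda>"
    and identifiable: "\<And>n. identifiable C \<sigma> \<Omega> (\<Lambda>s n)"
    and limit: "\<And>\<mu> x t. \<mu> \<in> Lip_class C \<sigma> \<Omega> \<Longrightarrow> x \<in> \<Omega> \<Longrightarrow> t \<in> {0..1} \<Longrightarrow>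
      (\<lambda>n. \<Lambda>s n \<mu> x t) \<longlonglongrightarrow> \<Lambda> \<mu> x t"
  shows "identifiable C \<sigma> \<Omega> \<Lambda>"
  unfolding causal_identifiable_iff[OF causal(2)]
proof (intro ballI impI)
  fix \<mu> t t' x
  assume \<mu>: "\<mu> \<in> Lip_class C \<sigma> \<Omega>" and t: "t \<in> {0..1}" and t': "t' \<in> {0..1}"
    and masks: "mask \<mu> t = mask \<mu> t'" and x: "x \<in> \<Omega>"
  have "\<Lambda>s n \<mu> x t = \<Lambda>s n \<mu> x t'" for n
    using identifiable[of n] causal(1)[of n] \<mu> t t' masks x
    unfolding causal_identifiable_iff[OF causal(1)] by blast
  then have "(\<lambda>n. \<Lambda>s n \<mu> x t) \<longlonglongrightarrow> \<Lambda> \<mu> x t'"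
    using limit[OF \<mu> x t'] by simp
  with limit[OF \<mu> x t] show "\<Lambda> \<mu> x t = \<Lambda> \<mu> x t'"
    by (rule LIMSEQ_unique)
qed

theorem lemmaC4:
  fixes \<Omega> :: "'a::euclidean_space set" and C \<sigma> :: real
    and \<Lambda>s :: "nat \<Rightarrow> ('a \<times> real) measure \<Rightarrow> 'a \<Rightarrow> real \<Rightarrow> 'e::euclidean_space"
    and \<Lambda>star :: "('a \<times> real) measure \<Rightarrow> 'a \<Rightarrow> real \<Rightarrow> 'e"
  assumes "compact \<Omega>" and "C > 0" and "0 < \<sigma>" and "\<sigma> < 1"
    and "\<And>n. in_context_continuous C \<sigma> \<Omega> (\<Lambda>s n)"
    and "\<And>n. causal C \<sigma> \<Omega> (\<Lambda>s n)"
    and "\<And>n. identifiable C \<sigma> \<Omega> (\<Lambda>s n)"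
    and "in_context_continuous C \<sigma> \<Omega> \<Lambda>star"
    and "causal C \<sigma> \<Omega> \<Lambda>star"
    and "uniform_limit (Lip_class C \<sigma> \<Omega> \<times> \<Omega> \<times> {0..1})
           (\<lambda>n (\<mu>, x, t). \<Lambda>s n \<mu> x t) (\<lambda>(\<mu>, x, t). \<Lambda>star \<mu> x t) sequentially"
  shows "identifiable C \<sigma> \<Omega> \<Lambda>star"
proof (rule identifiable_pointwise_limit[OF assms(6,9,7)])
  fix \<mu> x and t :: real
  assume "\<mu> \<in> Lip_class C \<sigma> \<Omega>" "x \<in> \<Omega>" "t \<in> {0..1}"
  then show "(\<lambda>n. \<Lambda>s n \<mu> x t) \<longlonglongrightarrow> \<Lambda>star \<mu> x t"
    using tendsto_uniform_limitI[OF assms(10), of "(\<mu>, x, t)"] by simp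
qed

end
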